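(* There are two positive $C^\infty$ functions $\psi_1,\psi_2$ on $\mathbb{R}$, solutions of $L_0(\psi)=0$, such that: (1) $\psi_1(-v)=\psi_2(v)>0$ for all $v\in\mathbb{R}$; (2) $\{\psi_1,\psi_2\}$ is a basis of solutions of $L_0(\psi)=0$, and the Wronskian satisfies $\psi_1\psi_2'-\psi_1'\psi_2=1$ on $\mathbb{R}$; (3) for some $v_0>0$ large enough and positive constants $c_1,c_2$, $$\psi_1(v)\lesssim |v|^{-\gamma}\ (v\geqslant v_0),\qquad \psi_1(v)\lesssim|v|^{1+\gamma}\ (v\leqslant -v_0),$$ $$\psi_1(v)\sim c_1|v|^{-\gamma}\text{ at }+\infty,\qquad \psi_1(v)\sim c_2|v|^{1+\gamma}\text{ at }-\infty,$$ and correspondingly $$\psi_2(v)\lesssim |v|^{\gamma+1}\ (v\geqslant v_0),\qquad \psi_2(v)\lesssim|v|^{-\gamma}\ (v\leqslant -v_0),$$ $$\psi_2(v)\sim c_2|v|^{1+\gamma}\text{ at }+\infty,\qquad \psi_2(v)\sim c_1|v|^{-\gamma}\text{ at }-\infty.$$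
   Context: Fix $\gamma>1/2$. Let $\tilde W(v)=\frac{\gamma(\gamma+1)}{1+v^2}$ and $L_0(\psi)=-\psi''+\tilde W\psi$ on $\mathbb{R}$. The symbol $A\lesssim B$ means $A\leqslant CB$ for a constant $C>0$ independent of $v$. *)

theory Defs
  imports "HOL-Analysis.Analysis" "HOL-Library.Landau_Symbols"
begin

definition Wt :: "real \<Rightarrow> real \<Rightarrow> real" where
  "Wt \<gamma> v = \<gamma> * (\<gamma> + 1) / (1 + v\<^sup>2)"

definition L0 :: "real \<Rightarrow> (real \<Rightarrow> real) \<Rightarrow> real \<Rightarrow> real" where
  "L0 \<gamma> \<psi> v = - deriv (deriv \<psi>) v + Wt \<gamma> v * \<psi> v"

definition L0_solution :: "real \<Rightarrow> (real \<Rightarrow> real) \<Rightarrow> bool" where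
  "L0_solution \<gamma> \<psi> \<longleftrightarrow>
     (\<forall>v. \<psi> differentiable (at v)) \<and> (\<forall>v. deriv \<psi> differentiable (at v)) \<and>
     (\<forall>v. L0 \<gamma> \<psi> v = 0)"

definition smooth_real :: "(real \<Rightarrow> real) \<Rightarrow> bool" where
  "smooth_real f \<longleftrightarrow> (\<forall>k v. ((deriv ^^ k) f) differentiable (at v))"

end

theory Submission
  imports Defs
begin

text \<open>
  Put \<open>m = \<gamma> + 1\<close> and \<open>Phi m v = \<integral>\<^sub>0\<^sup>\<infinity> s\<^sup>m (1 + (v + s)\<^sup>2)\<^sup>-\<^sup>m ds\<close>.
  Differentiating twice under the integral sign and integrating by parts in \<open>s\<close> gives
  \<open>(1 + v\<^sup>2) Phi'' = m (m - 1) Phi = \<gamma> (\<gamma> + 1) Phi\<close>, i.e. \<open>L0 Phi = 0\<close>; clearly \<open>Phi > 0\<close>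
  and \<open>Phi'(0) < 0\<close>. The substitutions \<open>s = v s'\<close> and \<open>s = |v| + t\<close> together with dominated
  convergence give \<open>Phi(v) \<sim> c\<^sub>1 v\<^sup>-\<^sup>\<gamma>\<close> at \<open>+\<infinity>\<close> and \<open>Phi(v) \<sim> c\<^sub>2 |v|\<^sup>1\<^sup>+\<^sup>\<gamma>\<close> at \<open>-\<infinity>\<close>.
  Since the potential is even, \<open>Phi(-v)\<close> is a second solution; the Wronskian of the pair is the
  constant \<open>-2 Phi(0) Phi'(0) > 0\<close>, so after rescaling \<open>\<psi>\<^sub>1 = k Phi\<close>, \<open>\<psi>\<^sub>2 = \<psi>\<^sub>1(-\<cdot>)\<close> have
  Wronskian 1 and form a basis.
\<close>

section \<open>Smoothness of solutions\<close>

definition differentiable_upto :: "nat \<Rightarrow> (real \<Rightarrow> real) \<Rightarrow> bool" where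
  "differentiable_upto n f \<longleftrightarrow> (\<forall>j<n. \<forall>v. (deriv ^^ j) f differentiable (at v))"

lemma differentiable_upto_0 [simp]: "differentiable_upto 0 f"
  by (simp add: differentiable_upto_def)

lemma differentiable_upto_Suc:
  "differentiable_upto (Suc n) f \<longleftrightarrow>
     (\<forall>v. f differentiable (at v)) \<and> differentiable_upto n (deriv f)"
proof -
  have "(deriv ^^ Suc j) f = (deriv ^^ j) (deriv f)" for j
    by (simp add: funpow_Suc_right del: funpow.simps)
  then show ?thesis
    unfolding differentiable_upto_def All_less_Suc2 by simp
qed

lemma differentiable_upto_SucD: "differentiable_upto (Suc n) f \<Longrightarrow> differentiable_upto n f"
  by (simp add: differentiable_upto_def)

lemma smooth_real_iff_differentiable_upto: "smooth_real f \<longleftrightarrow> (\<forall>n. differentiable_upto n f)"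
  unfolding smooth_real_def differentiable_upto_def by (metis lessI)

lemma deriv_add_fun:
  fixes f g :: "real \<Rightarrow> real"
  assumes "\<forall>v. f differentiable (at v)" "\<forall>v. g differentiable (at v)"
  shows "deriv (\<lambda>x. f x + g x) = (\<lambda>x. deriv f x + deriv g x)"
  using assms by (simp add: fun_eq_iff field_differentiable_def real_differentiable_def)

lemma deriv_mult_fun:
  fixes f g :: "real \<Rightarrow> real"
  assumes "\<forall>v. f differentiable (at v)" "\<forall>v. g differentiable (at v)"
  shows "deriv (\<lambda>x. f x * g x) = (\<lambda>x. deriv f x * g x + f x * deriv g x)"
  using assms by (simp add: fun_eq_iff field_differentiable_def real_differentiable_def)

lemma differentiable_upto_add:
  "differentiable_upto n f \<Longrightarrow> differentiable_upto n g \<Longrightarrow> differentiable_upto n (\<lambda>x. f x + g x)"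
proof (induction n arbitrary: f g)
  case (Suc n)
  then have "\<forall>v. f differentiable (at v)" "\<forall>v. g differentiable (at v)"
    by (simp_all add: differentiable_upto_Suc)
  with Suc show ?case by (auto simp: differentiable_upto_Suc deriv_add_fun)
qed simp

lemma differentiable_upto_mult:
  "differentiable_upto n f \<Longrightarrow> differentiable_upto n g \<Longrightarrow> differentiable_upto n (\<lambda>x. f x * g x)"
proof (induction n arbitrary: f g)
  case (Suc n)
  then have "\<forall>v. f differentiable (at v)" "\<forall>v. g differentiable (at v)"
    by (simp_all add: differentiable_upto_Suc)
  moreover have "differentiable_upto n (\<lambda>x. deriv f x * g x + f x * deriv g x)"
    using Suc by (intro differentiable_upto_add Suc.IH)
      (auto simp: differentiable_upto_Suc intro: differentiable_upto_SucD)
  ultimately show ?case by (auto simp: differentiable_upto_Suc deriv_mult_fun)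
qed simp

lemma differentiable_upto_const: "differentiable_upto n (\<lambda>x. c)"
  by (induction n arbitrary: c) (simp_all add: differentiable_upto_Suc)

lemma differentiable_upto_ident: "differentiable_upto n (\<lambda>x. x)"
  by (cases n) (simp_all add: differentiable_upto_Suc differentiable_upto_const)

lemma one_plus_square_pos [simp]: "0 < 1 + (x::real)\<^sup>2"
  by (simp add: add_pos_nonneg)

lemma one_plus_square_neq_0 [simp]: "1 + (x::real)\<^sup>2 \<noteq> 0"
  using one_plus_square_pos[of x] by linarith

lemma differentiable_upto_inverse_one_plus_square:
  "differentiable_upto n (\<lambda>v. 1 / (1 + v\<^sup>2))"
proof (induction n)
  case (Suc n)
  have D: "((\<lambda>v. 1 / (1 + v\<^sup>2)) has_real_derivative
      -2 * x * (1 / (1 + x\<^sup>2)) * (1 / (1 + x\<^sup>2))) (at x)" for x :: real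
    using one_plus_square_pos[of x] by (auto intro!: derivative_eq_intros simp: field_simps power2_eq_square)
  then have "deriv (\<lambda>v::real. 1 / (1 + v\<^sup>2)) = (\<lambda>x. -2 * x * (1 / (1 + x\<^sup>2)) * (1 / (1 + x\<^sup>2)))"
    by (auto intro!: DERIV_imp_deriv)
  moreover have "\<forall>v. (\<lambda>v::real. 1 / (1 + v\<^sup>2)) differentiable (at v)"
    using D real_differentiable_def by blast
  moreover have "differentiable_upto n (\<lambda>x. -2 * x * (1 / (1 + x\<^sup>2)) * (1 / (1 + x\<^sup>2)))"
    by (intro differentiable_upto_mult differentiable_upto_const differentiable_upto_ident Suc.IH)
  ultimately show ?case by (simp add: differentiable_upto_Suc)
qed simp

lemma differentiable_upto_Wt: "differentiable_upto n (Wt \<gamma>)"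
proof -
  have "Wt \<gamma> = (\<lambda>v. \<gamma> * (\<gamma> + 1) * (1 / (1 + v\<^sup>2)))"
    by (simp add: Wt_def fun_eq_iff)
  moreover have "differentiable_upto n (\<lambda>v. \<gamma> * (\<gamma> + 1) * (1 / (1 + v\<^sup>2)))"
    by (rule differentiable_upto_mult[OF differentiable_upto_const
          differentiable_upto_inverse_one_plus_square])
  ultimately show ?thesis by simp
qed

lemma L0_solution_smooth:
  assumes "L0_solution \<gamma> f"
  shows "smooth_real f"
proof -
  have f'': "deriv (deriv f) = (\<lambda>v. Wt \<gamma> v * f v)"
    using assms by (auto simp: L0_solution_def L0_def fun_eq_iff)
  have "differentiable_upto n f \<and> differentiable_upto n (deriv f)" for n
  proof (induction n)
    case (Suc n)
    then show ?case
      using assms differentiable_upto_mult[OF differentiable_upto_Wt, of n f]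
      by (auto simp: differentiable_upto_Suc L0_solution_def f'')
  qed simp
  then show ?thesis by (simp add: smooth_real_iff_differentiable_upto)
qed

section \<open>The solution space\<close>

lemma L0_solution_derivatives:
  assumes "L0_solution \<gamma> f"
  shows "(f has_real_derivative deriv f v) (at v)"
    and "(deriv f has_real_derivative Wt \<gamma> v * f v) (at v)"
proof -
  have "deriv (deriv f) v = Wt \<gamma> v * f v"
    using assms by (simp add: L0_solution_def L0_def)
  then show "(f has_real_derivative deriv f v) (at v)"
    and "(deriv f has_real_derivative Wt \<gamma> v * f v) (at v)"
    using assms by (metis DERIV_deriv_iff_real_differentiable L0_solution_def)+
qed

lemma L0_solutionI:
  assumes f: "\<And>v. (f has_real_derivative f' v) (at v)"
    and f': "\<And>v. (f' has_real_derivative Wt \<gamma> v * f v) (at v)"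
  shows "L0_solution \<gamma> f"
proof -
  have "deriv f = f'" "deriv f' = (\<lambda>v. Wt \<gamma> v * f v)"
    using f f' by (auto intro!: DERIV_imp_deriv)
  then show ?thesis
    using f f' by (auto simp: L0_solution_def L0_def real_differentiable_def)
qed

lemma L0_solution_cmult:
  assumes "L0_solution \<gamma> f"
  shows "L0_solution \<gamma> (\<lambda>v. c * f v)"
proof (rule L0_solutionI)
  show "((\<lambda>v. c * f v) has_real_derivative c * deriv f v) (at v)" for v
    by (intro DERIV_cmult L0_solution_derivatives(1)[OF assms])
  show "((\<lambda>v. c * deriv f v) has_real_derivative Wt \<gamma> v * (c * f v)) (at v)" for v
    using DERIV_cmult[OF L0_solution_derivatives(2)[OF assms], of c] by (simp add: mult.left_commute)
qed

lemma L0_solution_reflect_derivative: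
  assumes "L0_solution \<gamma> f"
  shows "((\<lambda>v. f (- v)) has_real_derivative - deriv f (- v)) (at v)"
proof -
  have "((\<lambda>v. f (- v)) has_real_derivative deriv f (- v) * (- 1)) (at v)"
    by (rule DERIV_chain2[OF L0_solution_derivatives(1)[OF assms]]) (auto intro!: derivative_eq_intros)
  then show ?thesis by simp
qed

lemma L0_solution_reflect:
  assumes "L0_solution \<gamma> f"
  shows "L0_solution \<gamma> (\<lambda>v. f (- v))"
proof (rule L0_solutionI[OF L0_solution_reflect_derivative[OF assms]])
  fix v
  have "((\<lambda>v. deriv f (- v)) has_real_derivative Wt \<gamma> (- v) * f (- v) * (- 1)) (at v)"
    by (rule DERIV_chain2[OF L0_solution_derivatives(2)[OF assms]]) (auto intro!: derivative_eq_intros)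
  from DERIV_minus[OF this]
  show "((\<lambda>v. - deriv f (- v)) has_real_derivative Wt \<gamma> v * f (- v)) (at v)"
    by (simp add: Wt_def)
qed

lemma wronskian_constant:
  assumes "L0_solution \<gamma> f" "L0_solution \<gamma> g"
  shows "f v * deriv g v - deriv f v * g v = f 0 * deriv g 0 - deriv f 0 * g 0"
proof -
  have "((\<lambda>v. f v * deriv g v - deriv f v * g v) has_real_derivative 0) (at x)" for x
    by (rule derivative_eq_intros L0_solution_derivatives assms refl)+ (simp add: algebra_simps)
  then show ?thesis using DERIV_isconst_all by blast
qed

lemma wronskian_reflect:
  assumes "L0_solution \<gamma> f"
  shows "f v * deriv (\<lambda>v. f (- v)) v - deriv f v * f (- v) = - 2 * f 0 * deriv f 0"
proof -
  have "deriv (\<lambda>v. f (- v)) = (\<lambda>v. - deriv f (- v))"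
    using L0_solution_reflect_derivative[OF assms] by (auto intro!: DERIV_imp_deriv)
  then show ?thesis
    using wronskian_constant[OF assms L0_solution_reflect[OF assms], of v] by simp
qed

lemma L0_solution_in_span:
  assumes "L0_solution \<gamma> \<psi>1" "L0_solution \<gamma> \<psi>2" "L0_solution \<gamma> f"
    and W: "\<forall>v. \<psi>1 v * deriv \<psi>2 v - deriv \<psi>1 v * \<psi>2 v = 1"
  shows "\<exists>a b. \<forall>v. f v = a * \<psi>1 v + b * \<psi>2 v"
proof (intro exI allI)
  fix v
  define a where "a = f 0 * deriv \<psi>2 0 - deriv f 0 * \<psi>2 0"
  define b where "b = \<psi>1 0 * deriv f 0 - deriv \<psi>1 0 * f 0"
  have a: "f v * deriv \<psi>2 v - deriv f v * \<psi>2 v = a"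
    unfolding a_def by (rule wronskian_constant[OF assms(3,2)])
  have b: "\<psi>1 v * deriv f v - deriv \<psi>1 v * f v = b"
    unfolding b_def by (rule wronskian_constant[OF assms(1,3)])
  have "a * \<psi>1 v + b * \<psi>2 v = f v * (\<psi>1 v * deriv \<psi>2 v - deriv \<psi>1 v * \<psi>2 v)"
    unfolding a[symmetric] b[symmetric] by (simp add: algebra_simps)
  then show "f v = a * \<psi>1 v + b * \<psi>2 v" using W by simp
qed

lemma L0_solutions_independent:
  assumes "L0_solution \<gamma> \<psi>1" "L0_solution \<gamma> \<psi>2"
    and W: "\<forall>v. \<psi>1 v * deriv \<psi>2 v - deriv \<psi>1 v * \<psi>2 v = 1"
    and zero: "\<forall>v. a * \<psi>1 v + b * \<psi>2 v = 0"
  shows "a = 0 \<and> b = 0"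
proof -
  have "((\<lambda>v. a * \<psi>1 v + b * \<psi>2 v) has_real_derivative a * deriv \<psi>1 0 + b * deriv \<psi>2 0) (at 0)"
    by (rule derivative_eq_intros L0_solution_derivatives assms refl)+ simp
  then have zero': "a * deriv \<psi>1 0 + b * deriv \<psi>2 0 = 0"
    using zero DERIV_unique[OF _ DERIV_const] by fastforce
  have zero0: "a * \<psi>1 0 + b * \<psi>2 0 = 0"
    using zero by simp
  have "a = (a * \<psi>1 0 + b * \<psi>2 0) * deriv \<psi>2 0 - (a * deriv \<psi>1 0 + b * deriv \<psi>2 0) * \<psi>2 0"
    using W[rule_format, of 0] by (simp add: algebra_simps)
  moreover have "b = \<psi>1 0 * (a * deriv \<psi>1 0 + b * deriv \<psi>2 0) - deriv \<psi>1 0 * (a * \<psi>1 0 + b * \<psi>2 0)"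
    using W[rule_format, of 0] by (simp add: algebra_simps)
  ultimately show ?thesis
    unfolding zero0 zero' by simp
qed

lemma abs_difference_quotient_le:
  fixes f f' :: "real \<Rightarrow> real"
  assumes "\<And>u. (f has_real_derivative f' u) (at u)" and "\<And>u. \<bar>u - v\<bar> \<le> 1 \<Longrightarrow> \<bar>f' u\<bar> \<le> B"
    and "h \<noteq> 0" "\<bar>h\<bar> \<le> 1"
  shows "\<bar>(f (v + h) - f v) / h\<bar> \<le> B"
proof -
  have "\<bar>f (v + h) - f v\<bar> \<le> B * \<bar>v + h - v\<bar>"
    using field_differentiable_bound[of "cball v 1" f f' B "v + h" v] assms
    by (auto simp: dist_real_def has_field_derivative_at_within abs_minus_commute)
  then show ?thesis
    using assms(3) by (simp add: divide_le_eq)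
qed

lemma has_real_derivative_integral_lborel:
  fixes F F' :: "real \<Rightarrow> real \<Rightarrow> real"
  assumes D: "\<And>u s. ((\<lambda>u. F u s) has_real_derivative F' u s) (at u)"
    and M: "\<And>u. F u \<in> borel_measurable lborel" "\<And>u. F' u \<in> borel_measurable lborel"
    and I: "\<And>u. integrable lborel (F u)"
    and g: "integrable lborel g"
    and B: "\<And>u s. \<bar>u - v\<bar> \<le> 1 \<Longrightarrow> \<bar>F' u s\<bar> \<le> g s"
  shows "((\<lambda>u. \<integral>s. F u s \<partial>lborel) has_real_derivative (\<integral>s. F' v s \<partial>lborel)) (at v)"
  unfolding DERIV_def tendsto_at_iff_sequentially
proof (intro allI impI)
  fix X :: "nat \<Rightarrow> real"
  assume X: "\<forall>i. X i \<in> UNIV - {0}" "X \<longlonglongrightarrow> 0"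
  obtain N where N: "\<And>n. n \<ge> N \<Longrightarrow> \<bar>X n\<bar> \<le> 1"
    using X(2) unfolding LIMSEQ_def dist_real_def
    by (metis diff_zero less_eq_real_def zero_less_one)
  define Q where "Q = (\<lambda>h s. (F (v + h) s - F v s) / h)"
  have Q_bound: "\<bar>Q h s\<bar> \<le> g s" if "h \<noteq> 0" "\<bar>h\<bar> \<le> 1" for h s
    unfolding Q_def using D B that by (rule abs_difference_quotient_le)
  have "(\<lambda>n. \<integral>s. Q (X (n + N)) s \<partial>lborel) \<longlonglongrightarrow> (\<integral>s. F' v s \<partial>lborel)"
  proof (rule integral_dominated_convergence[where w = g])
    show "(\<lambda>s. Q (X (n + N)) s) \<in> borel_measurable lborel" for n
      unfolding Q_def using M(1) by measurable
    show "AE s in lborel. (\<lambda>n. Q (X (n + N)) s) \<longlonglongrightarrow> F' v s"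
    proof (intro AE_I2)
      fix s
      have L: "((\<lambda>h. Q h s) \<longlongrightarrow> F' v s) (at 0)"
        using D unfolding DERIV_def Q_def by blast
      have "\<And>i. X (i + N) \<in> UNIV - {0}" "(\<lambda>i. X (i + N)) \<longlonglongrightarrow> 0"
        using X by (auto intro: LIMSEQ_ignore_initial_segment)
      from L[unfolded tendsto_at_iff_sequentially, rule_format, OF this]
      show "(\<lambda>n. Q (X (n + N)) s) \<longlonglongrightarrow> F' v s"
        by (simp add: o_def)
    qed
    show "AE s in lborel. norm (Q (X (n + N)) s) \<le> g s" for n
      using X N by (auto intro!: AE_I2 Q_bound)
  qed (use M g in auto)
  moreover have "((\<integral>s. F (v + X n) s \<partial>lborel) - (\<integral>s. F v s \<partial>lborel)) / X n
      = (\<integral>s. Q (X n) s \<partial>lborel)" for n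
    unfolding Q_def by (simp add: Bochner_Integration.integral_diff[OF I I])
  ultimately show "((\<lambda>h. ((\<integral>s. F (v + h) s \<partial>lborel) - (\<integral>s. F v s \<partial>lborel)) / h) \<circ> X)
      \<longlonglongrightarrow> (\<integral>s. F' v s \<partial>lborel)"
    unfolding o_def by (simp add: LIMSEQ_offset)
qed

lemma tendsto_integral_rescaled_at_top:
  fixes F :: "real \<Rightarrow> real \<Rightarrow> real"
  assumes meas: "\<And>e. F e \<in> borel_measurable borel"
    and g: "integrable lborel g"
    and bound: "\<And>e s. \<bar>e\<bar> \<le> 1 \<Longrightarrow> \<bar>F e s\<bar> \<le> g s"
    and cont: "\<And>s. isCont (\<lambda>e. F e s) 0"
  shows "((\<lambda>v. \<integral>s. F (1 / v) s \<partial>lborel) \<longlongrightarrow> (\<integral>s. F 0 s \<partial>lborel)) at_top"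
proof (rule integral_dominated_convergence_at_top[where w = g])
  have "((\<lambda>v::real. 1 / v) \<longlongrightarrow> 0) at_top"
    by (intro tendsto_divide_0[OF tendsto_const] filterlim_at_top_imp_at_infinity filterlim_ident)
  then show "AE s in lborel. ((\<lambda>v. F (1 / v) s) \<longlongrightarrow> F 0 s) at_top"
    by (intro AE_I2 isCont_tendsto_compose[OF cont])
  show "\<forall>\<^sub>F v in at_top. AE s in lborel. norm (F (1 / v) s) \<le> g s"
    using eventually_ge_at_top[of 1]
  proof eventually_elim
    case (elim v)
    then show ?case
      by (intro AE_I2) (simp add: bound)
  qed
  show "F 0 \<in> borel_measurable lborel" "(\<lambda>s. F (1 / v) s) \<in> borel_measurable lborel" for v
    using meas by simp_all
qed (rule g)

lemma integral_pos_lborel: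
  fixes f :: "real \<Rightarrow> real"
  assumes "integrable lborel f" and "\<And>x. 0 \<le> f x"
    and "\<And>x. a < x \<Longrightarrow> x < b \<Longrightarrow> 0 < f x" and "a < b"
  shows "0 < (\<integral>x. f x \<partial>lborel)"
proof -
  have "(\<integral>x. f x \<partial>lborel) \<noteq> 0"
  proof
    assume "(\<integral>x. f x \<partial>lborel) = 0"
    then have "AE x in lborel. f x = 0"
      using integral_nonneg_eq_0_iff_AE[OF assms(1)] assms(2) by simp
    then have "AE x in lborel. x \<notin> {a<..<b}"
      by eventually_elim (use assms(3) in force)
    then have "{a<..<b} \<in> null_sets lborel"
      by (subst AE_iff_null_sets) auto
    then have "emeasure lborel {a<..<b} = 0"
      by auto
    then show False
      using assms(4) by simp
  qed
  with assms(2) show ?thesis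
    by (simp add: integral_nonneg order_less_le)
qed

lemma set_integrable_one_plus_powr_Ioi:
  assumes "m > 1"
  shows "set_integrable lborel {0<..} (\<lambda>s::real. (1 + s) powr (- m))"
proof -
  define F where "F s = - ((1 + s) powr (1 - m)) / (m - 1)" for s :: real
  have F': "(F has_real_derivative (1 + s) powr (- m)) (at s)" if "s > -1" for s
  proof -
    have "((\<lambda>s. 1 + s) has_real_derivative 1) (at s)"
      by (auto intro!: derivative_eq_intros)
    from DERIV_fun_powr[OF this, of "1 - m"] that
    have "((\<lambda>s. (1 + s) powr (1 - m)) has_real_derivative (1 - m) * (1 + s) powr (1 - m - 1) * 1) (at s)"
      by simp
    from DERIV_cdivide[OF DERIV_minus[OF this], of "m - 1"] show ?thesis
      unfolding F_def[abs_def] by (rule DERIV_cong) (use assms in \<open>simp add: field_simps\<close>)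
  qed
  have "set_integrable lborel (einterval (ereal 0) \<infinity>) (\<lambda>s. (1 + s) powr (- m))"
  proof (rule interval_integral_FTC_nonneg)
    show "((F \<circ> real_of_ereal) \<longlongrightarrow> F 0) (at_right (ereal 0))"
      unfolding ereal_tendsto_simps1
      using DERIV_isCont[OF F'[of 0]] by (simp add: isCont_def filterlim_at_split)
    have "((\<lambda>s. (1 + s) powr (1 - m)) \<longlongrightarrow> 0) at_top"
      using assms by (intro tendsto_neg_powr filterlim_tendsto_add_at_top[OF tendsto_const filterlim_ident])
        auto
    then have "(F \<longlongrightarrow> 0) at_top"
      unfolding F_def using tendsto_divide[OF tendsto_minus tendsto_const, of _ 0 at_top "m - 1"] assms
      by simp
    then show "((F \<circ> real_of_ereal) \<longlongrightarrow> 0) (at_left \<infinity>)"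
      unfolding ereal_tendsto_simps1 by simp
  qed (auto intro!: F' continuous_intros)
  then show ?thesis
    by simp
qed

lemma integrable_one_plus_abs_powr:
  assumes "m > 1"
  shows "integrable lborel (\<lambda>s::real. (1 + \<bar>s\<bar>) powr (- m))"
proof -
  have h: "integrable lborel (\<lambda>s. indicator {0<..} s * (1 + s) powr (- m))"
    using set_integrable_one_plus_powr_Ioi[OF assms] by (simp add: set_integrable_def)
  have "integrable lborel (\<lambda>s. indicator {0<..} s * (1 + s) powr (- m)
      + indicator {0<..} (0 + (- 1) * s) * (1 + (0 + (- 1) * s)) powr (- m))"
    using h lborel_integrable_real_affine[OF h, of "- 1" 0] by simp
  moreover have "AE s in lborel. indicator {0<..} s * (1 + s) powr (- m)
      + indicator {0<..} (0 + (- 1) * s) * (1 + (0 + (- 1) * s)) powr (- m) = (1 + \<bar>s\<bar>) powr (- m)"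
    using AE_lborel_singleton[of 0] by eventually_elim (auto simp: indicator_def)
  ultimately show ?thesis
    by (subst integrable_cong_AE[symmetric]) auto
qed

lemma asymp_equiv_at_top_of_powr_limit:
  fixes f :: "real \<Rightarrow> real"
  assumes lim: "((\<lambda>v. v powr a * f v) \<longlongrightarrow> c) at_top" and c: "c \<noteq> 0"
  shows "f \<sim>[at_top] (\<lambda>v. c * \<bar>v\<bar> powr (- a))"
proof (rule asymp_equivI')
  have "((\<lambda>v. v powr a * f v / c) \<longlongrightarrow> c / c) at_top"
    using lim by (intro tendsto_divide tendsto_const c)
  then have "((\<lambda>v. v powr a * f v / c) \<longlongrightarrow> 1) at_top"
    using c by simp
  then show "((\<lambda>v. f v / (c * \<bar>v\<bar> powr (- a))) \<longlongrightarrow> 1) at_top"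
  proof (rule Lim_transform_eventually)
    show "\<forall>\<^sub>F v in at_top. v powr a * f v / c = f v / (c * \<bar>v\<bar> powr (- a))"
      using eventually_gt_at_top[of 0] by eventually_elim (simp add: powr_minus field_simps)
  qed
qed

lemma asymp_equiv_at_bot_iff_mirror:
  fixes f g :: "real \<Rightarrow> real"
  shows "f \<sim>[at_bot] g \<longleftrightarrow> (\<lambda>x. f (- x)) \<sim>[at_top] (\<lambda>x. g (- x))"
  by (simp add: asymp_equiv_def filterlim_at_bot_mirror)

lemma eventually_le_twice_of_asymp_equiv:
  fixes f g :: "'a \<Rightarrow> real"
  assumes "f \<sim>[F] g" "eventually (\<lambda>x. g x > 0) F"
  shows "eventually (\<lambda>x. f x \<le> 2 * g x) F"
proof -
  have "eventually (\<lambda>x. (if f x = 0 \<and> g x = 0 then 1 else f x / g x) < 2) F"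
    using order_tendstoD(2)[OF asymp_equivD[OF assms(1)]] by simp
  with assms(2) show ?thesis
    by eventually_elim (auto simp: divide_less_eq split: if_splits)
qed

lemma asymp_equiv_powr_imp_bound_at_top:
  fixes f :: "real \<Rightarrow> real"
  assumes "f \<sim>[at_top] (\<lambda>v. c * \<bar>v\<bar> powr a)" "c > 0"
  shows "\<exists>N. \<forall>v\<ge>N. f v \<le> 2 * c * \<bar>v\<bar> powr a"
proof -
  have "eventually (\<lambda>v. c * \<bar>v\<bar> powr a > 0) at_top"
    using assms(2) by (intro eventually_at_top_linorderI[of 1]) simp
  from eventually_le_twice_of_asymp_equiv[OF assms(1) this] show ?thesis
    by (simp add: eventually_at_top_linorder mult.assoc)
qed

lemma powr_bounds_of_asymp_equiv:
  fixes f :: "real \<Rightarrow> real"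
  assumes top: "f \<sim>[at_top] (\<lambda>v. c1 * \<bar>v\<bar> powr a)" and bot: "f \<sim>[at_bot] (\<lambda>v. c2 * \<bar>v\<bar> powr b)"
    and c: "c1 > 0" "c2 > 0"
  shows "\<exists>v0>0. \<exists>C>0. (\<forall>v\<ge>v0. f v \<le> C * \<bar>v\<bar> powr a) \<and> (\<forall>v\<le>-v0. f v \<le> C * \<bar>v\<bar> powr b)"
proof -
  obtain N1 where N1: "\<forall>v\<ge>N1. f v \<le> 2 * c1 * \<bar>v\<bar> powr a"
    using asymp_equiv_powr_imp_bound_at_top[OF top c(1)] by blast
  have "(\<lambda>v. f (- v)) \<sim>[at_top] (\<lambda>v. c2 * \<bar>v\<bar> powr b)"
    using bot by (simp add: asymp_equiv_at_bot_iff_mirror)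
  then obtain N2 where N2: "\<forall>v\<ge>N2. f (- v) \<le> 2 * c2 * \<bar>v\<bar> powr b"
    using asymp_equiv_powr_imp_bound_at_top c(2) by blast
  define v0 where "v0 = max 1 (max N1 N2)"
  define C where "C = 2 * max c1 c2"
  have le_C: "2 * c1 * \<bar>v\<bar> powr a \<le> C * \<bar>v\<bar> powr a" "2 * c2 * \<bar>v\<bar> powr b \<le> C * \<bar>v\<bar> powr b" for v
    unfolding C_def by (simp_all add: mult_right_mono)
  have "\<forall>v\<ge>v0. f v \<le> C * \<bar>v\<bar> powr a"
  proof (intro allI impI)
    fix v
    assume "v \<ge> v0"
    then have "f v \<le> 2 * c1 * \<bar>v\<bar> powr a"
      using N1[rule_format, of v] by (simp add: v0_def)
    with le_C(1)[of v] show "f v \<le> C * \<bar>v\<bar> powr a"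
      by linarith
  qed
  moreover have "\<forall>v\<le>-v0. f v \<le> C * \<bar>v\<bar> powr b"
  proof (intro allI impI)
    fix v
    assume "v \<le> - v0"
    then have "f v \<le> 2 * c2 * \<bar>v\<bar> powr b"
      using N2[rule_format, of "- v"] by (simp add: v0_def)
    with le_C(2)[of v] show "f v \<le> C * \<bar>v\<bar> powr b"
      by linarith
  qed
  moreover have "v0 > 0" "C > 0"
    using c by (simp_all add: v0_def C_def)
  ultimately show ?thesis
    by blast
qed

section \<open>The integral representation\<close>

lemma abs_le_one_plus_square: "\<bar>t\<bar> \<le> 1 + (t::real)\<^sup>2"
proof -
  have "0 \<le> (\<bar>t\<bar> - 1)\<^sup>2"
    by simp
  then have "2 * \<bar>t\<bar> \<le> 1 + t\<^sup>2"
    by (simp add: power2_diff)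
  then show ?thesis
    using abs_ge_zero[of t] by linarith
qed

lemma peetre_inequality: "1 + (x + y)\<^sup>2 \<le> 2 * (1 + x\<^sup>2) * (1 + (y::real)\<^sup>2)"
proof -
  have "(x + y)\<^sup>2 + (x - y)\<^sup>2 = 2 * x\<^sup>2 + 2 * y\<^sup>2"
    by (simp add: power2_eq_square algebra_simps)
  moreover have "2 * (1 + x\<^sup>2) * (1 + y\<^sup>2) = 2 + 2 * x\<^sup>2 + 2 * y\<^sup>2 + 2 * (x\<^sup>2 * y\<^sup>2)"
    by (simp add: algebra_simps)
  moreover have "0 \<le> (x - y)\<^sup>2" "0 \<le> x\<^sup>2 * y\<^sup>2"
    by simp_all
  ultimately show ?thesis by linarith
qed

definition Phi_kernel :: "real \<Rightarrow> real \<Rightarrow> real \<Rightarrow> real" where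
  "Phi_kernel m v s = (max s 0) powr m * (1 + (v + s)\<^sup>2) powr (- m)"

definition Phi_kernel' :: "real \<Rightarrow> real \<Rightarrow> real \<Rightarrow> real" where
  "Phi_kernel' m v s = - 2 * m * ((v + s) / (1 + (v + s)\<^sup>2)) * Phi_kernel m v s"

definition Phi_kernel'' :: "real \<Rightarrow> real \<Rightarrow> real \<Rightarrow> real" where
  "Phi_kernel'' m v s = - 2 * m * (1 - 2 * (m + 1) * ((v + s)\<^sup>2 / (1 + (v + s)\<^sup>2)))
     * (1 / (1 + (v + s)\<^sup>2)) * Phi_kernel m v s"

lemma has_real_derivative_Phi_kernel:
  "((\<lambda>v. Phi_kernel m v s) has_real_derivative Phi_kernel' m v s) (at v)"
proof -
  define T where "T = 1 + (v + s)\<^sup>2"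
  have "((\<lambda>v. 1 + (v + s)\<^sup>2) has_real_derivative 2 * (v + s)) (at v)"
    by (auto intro!: derivative_eq_intros)
  from DERIV_fun_powr[OF this one_plus_square_pos, of "- m"]
  have "((\<lambda>v. (1 + (v + s)\<^sup>2) powr (- m)) has_real_derivative
      (- m) * T powr (- m - 1) * (2 * (v + s))) (at v)"
    by (simp add: T_def)
  moreover have "T powr (- m - 1) = T powr (- m) / T"
    unfolding T_def by (simp add: powr_diff)
  ultimately show ?thesis
    unfolding Phi_kernel_def Phi_kernel'_def T_def[symmetric]
    by (auto intro!: DERIV_cmult[THEN DERIV_cong] simp: field_simps)
qed

lemma has_real_derivative_Phi_kernel':
  "((\<lambda>v. Phi_kernel' m v s) has_real_derivative Phi_kernel'' m v s) (at v)"
proof -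
  have key: "- 2 * m * ((1 - 2 * (t\<^sup>2 / T)) * (1 / T)) * K + - 2 * m * (t / T) * K * (- 2 * m * (t / T))
      = - 2 * m * (1 - 2 * (m + 1) * (t\<^sup>2 / T)) * (1 / T) * K" if "T > 0" for t T K :: real
    using that by (simp add: field_simps power2_eq_square)
  have "((\<lambda>v. - 2 * m * ((v + s) / (1 + (v + s)\<^sup>2))) has_real_derivative
      - 2 * m * ((1 - 2 * ((v + s)\<^sup>2 / (1 + (v + s)\<^sup>2))) * (1 / (1 + (v + s)\<^sup>2)))) (at v)"
    using one_plus_square_pos[of "v + s"]
    by (auto intro!: derivative_eq_intros simp: field_simps power2_eq_square)
  from DERIV_mult[OF this has_real_derivative_Phi_kernel]
  show ?thesis
    unfolding Phi_kernel'_def[abs_def]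
    by (rule DERIV_cong) (unfold Phi_kernel'_def Phi_kernel''_def, rule key, simp)
qed

lemma Phi_kernel_nonneg: "0 \<le> Phi_kernel m v s"
  by (simp add: Phi_kernel_def)

lemma Phi_kernel_eq_0: "s \<le> 0 \<Longrightarrow> Phi_kernel m v s = 0"
  by (simp add: Phi_kernel_def max_def)

lemma abs_Phi_kernel'_le:
  assumes "m \<ge> 0"
  shows "\<bar>Phi_kernel' m v s\<bar> \<le> 2 * m * Phi_kernel m v s"
proof -
  have "\<bar>(v + s) / (1 + (v + s)\<^sup>2)\<bar> \<le> 1"
    using abs_le_one_plus_square[of "v + s"] by simp
  then have "\<bar>Phi_kernel' m v s\<bar> \<le> 2 * m * 1 * Phi_kernel m v s"
    unfolding Phi_kernel'_def abs_mult using assms Phi_kernel_nonneg[of m v s]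
    by (intro mult_mono) auto
  then show ?thesis by simp
qed

lemma abs_Phi_kernel''_le:
  assumes "m \<ge> 0"
  shows "\<bar>Phi_kernel'' m v s\<bar> \<le> 2 * m * (2 * m + 3) * Phi_kernel m v s"
proof -
  define X where "X = (v + s)\<^sup>2 / (1 + (v + s)\<^sup>2)"
  have "0 \<le> X" "X \<le> 1"
    unfolding X_def by simp_all
  then have "0 \<le> 2 * (m + 1) * X" "2 * (m + 1) * X \<le> 2 * (m + 1)"
    using assms by (simp_all add: mult_left_le)
  then have "\<bar>1 - 2 * (m + 1) * X\<bar> \<le> 2 * m + 3"
    using assms by (simp add: abs_le_iff algebra_simps)
  moreover have "\<bar>1 / (1 + (v + s)\<^sup>2)\<bar> \<le> 1"
    by simp
  ultimately have "\<bar>Phi_kernel'' m v s\<bar> \<le> 2 * m * (2 * m + 3) * 1 * Phi_kernel m v s"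
    unfolding Phi_kernel''_def X_def[symmetric] abs_mult using assms Phi_kernel_nonneg[of m v s]
    by (intro mult_mono) auto
  then show ?thesis by simp
qed

definition Phi_kernel_majorant :: "real \<Rightarrow> real \<Rightarrow> real \<Rightarrow> real" where
  "Phi_kernel_majorant m R s = (3 * (1 + R\<^sup>2)) powr m * (1 + \<bar>s\<bar>) powr (- m)"

lemma Phi_kernel_majorant_nonneg: "0 \<le> Phi_kernel_majorant m R s"
  by (simp add: Phi_kernel_majorant_def)

lemma Phi_kernel_le_majorant:
  assumes "\<bar>u\<bar> \<le> R" "m \<ge> 0"
  shows "Phi_kernel m u s \<le> Phi_kernel_majorant m R s"
proof (cases "s > 0")
  case False
  then show ?thesis
    by (simp add: Phi_kernel_eq_0 Phi_kernel_majorant_nonneg)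
next
  case True
  define T where "T = 1 + (u + s)\<^sup>2"
  have T: "T > 0"
    unfolding T_def by simp
  have "1 + s\<^sup>2 \<le> 2 * (1 + u\<^sup>2) * T"
    using peetre_inequality[of "- u" "u + s"] by (simp add: T_def)
  moreover have "0 \<le> (s - 1)\<^sup>2"
    by simp
  ultimately have "s * (1 + s) \<le> 3 * (1 + u\<^sup>2) * T"
    by (simp add: power2_eq_square algebra_simps)
  also have "\<dots> \<le> 3 * (1 + R\<^sup>2) * T"
    using power_mono[OF assms(1), of 2] T by (intro mult_right_mono) auto
  finally have "s * (1 + s) / T \<le> 3 * (1 + R\<^sup>2)"
    using T by (simp add: pos_divide_le_eq)
  have "(s * (1 + s) / T) powr m * (1 + s) powr (- m)
      = s powr m * ((1 + s) powr m * (1 + s) powr (- m)) / T powr m"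
    using True T by (simp add: powr_divide powr_mult)
  also have "\<dots> = Phi_kernel m u s"
    using True by (simp add: Phi_kernel_def T_def powr_add[symmetric] powr_minus divide_inverse)
  finally have "Phi_kernel m u s = (s * (1 + s) / T) powr m * (1 + s) powr (- m)" ..
  also have "\<dots> \<le> (3 * (1 + R\<^sup>2)) powr m * (1 + s) powr (- m)"
    using \<open>s * (1 + s) / T \<le> 3 * (1 + R\<^sup>2)\<close> True T assms(2)
    by (intro mult_right_mono powr_mono2) auto
  finally show ?thesis
    using True by (simp add: Phi_kernel_majorant_def)
qed

lemma integrable_Phi_kernel_majorant: "m > 1 \<Longrightarrow> integrable lborel (\<lambda>s. c * Phi_kernel_majorant m R s)"
  unfolding Phi_kernel_majorant_def by (simp add: integrable_one_plus_abs_powr)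

lemma Phi_kernels_measurable:
  "Phi_kernel m v \<in> borel_measurable borel"
  "Phi_kernel' m v \<in> borel_measurable borel"
  "Phi_kernel'' m v \<in> borel_measurable borel"
  unfolding Phi_kernel_def Phi_kernel'_def Phi_kernel''_def by measurable

lemma isCont_Phi_kernel: "x > 0 \<Longrightarrow> isCont (\<lambda>s. Phi_kernel m v s) x"
  unfolding Phi_kernel_def by (intro continuous_intros) auto

lemma isCont_Phi_kernel'': "x > 0 \<Longrightarrow> isCont (\<lambda>s. Phi_kernel'' m v s) x"
  unfolding Phi_kernel''_def by (intro continuous_intros isCont_Phi_kernel) auto

lemma abs_Phi_kernels_le_majorant:
  assumes "\<bar>u\<bar> \<le> R" "m \<ge> 0"
  shows "\<bar>Phi_kernel m u s\<bar> \<le> Phi_kernel_majorant m R s"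
    and "\<bar>Phi_kernel' m u s\<bar> \<le> 2 * m * Phi_kernel_majorant m R s"
    and "\<bar>Phi_kernel'' m u s\<bar> \<le> 2 * m * (2 * m + 3) * Phi_kernel_majorant m R s"
proof -
  have K: "Phi_kernel m u s \<le> Phi_kernel_majorant m R s"
    by (rule Phi_kernel_le_majorant[OF assms])
  then show "\<bar>Phi_kernel m u s\<bar> \<le> Phi_kernel_majorant m R s"
    by (simp add: Phi_kernel_nonneg)
  show "\<bar>Phi_kernel' m u s\<bar> \<le> 2 * m * Phi_kernel_majorant m R s"
    using abs_Phi_kernel'_le[OF assms(2), of u s] mult_left_mono[OF K, of "2 * m"] assms(2)
    by simp
  show "\<bar>Phi_kernel'' m u s\<bar> \<le> 2 * m * (2 * m + 3) * Phi_kernel_majorant m R s"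
    using abs_Phi_kernel''_le[OF assms(2), of u s] mult_left_mono[OF K, of "2 * m * (2 * m + 3)"] assms(2)
    by simp
qed

lemma integrable_Phi_kernels:
  assumes "m > 1"
  shows "integrable lborel (Phi_kernel m v)"
    and "integrable lborel (Phi_kernel' m v)"
    and "integrable lborel (Phi_kernel'' m v)"
proof -
  note bounds = abs_Phi_kernels_le_majorant[of v "\<bar>v\<bar>" m]
  note majorant = integrable_Phi_kernel_majorant[OF assms, of _ "\<bar>v\<bar>"]
  show "integrable lborel (Phi_kernel m v)"
    by (rule Bochner_Integration.integrable_bound[OF majorant[of 1]])
      (use bounds assms in \<open>auto intro!: AE_I2 Phi_kernels_measurable order_trans[OF _ abs_ge_self]\<close>)
  show "integrable lborel (Phi_kernel' m v)"
    by (rule Bochner_Integration.integrable_bound[OF majorant[of "2 * m"]])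
      (use bounds assms in \<open>auto intro!: AE_I2 Phi_kernels_measurable order_trans[OF _ abs_ge_self]\<close>)
  show "integrable lborel (Phi_kernel'' m v)"
    by (rule Bochner_Integration.integrable_bound[OF majorant[of "2 * m * (2 * m + 3)"]])
      (use bounds assms in \<open>auto intro!: AE_I2 Phi_kernels_measurable order_trans[OF _ abs_ge_self]\<close>)
qed

definition Phi :: "real \<Rightarrow> real \<Rightarrow> real" where
  "Phi m v = (\<integral>s. Phi_kernel m v s \<partial>lborel)"

definition Phi' :: "real \<Rightarrow> real \<Rightarrow> real" where
  "Phi' m v = (\<integral>s. Phi_kernel' m v s \<partial>lborel)"

definition Phi'' :: "real \<Rightarrow> real \<Rightarrow> real" where
  "Phi'' m v = (\<integral>s. Phi_kernel'' m v s \<partial>lborel)"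

lemma has_real_derivative_Phi:
  assumes "m > 1"
  shows "(Phi m has_real_derivative Phi' m v) (at v)"
  unfolding Phi_def[abs_def] Phi'_def
proof (rule has_real_derivative_integral_lborel)
  show "integrable lborel (\<lambda>s. 2 * m * Phi_kernel_majorant m (\<bar>v\<bar> + 1) s)"
    using assms by (rule integrable_Phi_kernel_majorant)
  show "\<bar>Phi_kernel' m u s\<bar> \<le> 2 * m * Phi_kernel_majorant m (\<bar>v\<bar> + 1) s" if "\<bar>u - v\<bar> \<le> 1" for u s
    using that assms by (intro abs_Phi_kernels_le_majorant) auto
qed (use assms in \<open>auto intro: has_real_derivative_Phi_kernel Phi_kernels_measurable integrable_Phi_kernels\<close>)

lemma has_real_derivative_Phi':
  assumes "m > 1"
  shows "(Phi' m has_real_derivative Phi'' m v) (at v)"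
  unfolding Phi'_def[abs_def] Phi''_def
proof (rule has_real_derivative_integral_lborel)
  show "integrable lborel (\<lambda>s. 2 * m * (2 * m + 3) * Phi_kernel_majorant m (\<bar>v\<bar> + 1) s)"
    using assms by (rule integrable_Phi_kernel_majorant)
  show "\<bar>Phi_kernel'' m u s\<bar> \<le> 2 * m * (2 * m + 3) * Phi_kernel_majorant m (\<bar>v\<bar> + 1) s"
    if "\<bar>u - v\<bar> \<le> 1" for u s
    using that assms by (intro abs_Phi_kernels_le_majorant) auto
qed (use assms in \<open>auto intro: has_real_derivative_Phi_kernel' Phi_kernels_measurable integrable_Phi_kernels\<close>)

text \<open>The boundary term of the integration by parts in \<open>s\<close> that proves the differential equation for \<open>Phi\<close>.\<close>

definition Phi_ode_primitive :: "real \<Rightarrow> real \<Rightarrow> real \<Rightarrow> real" where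
  "Phi_ode_primitive m v s =
     m * (2 * v + s - 2 * (v + s) * (1 + v\<^sup>2) / (1 + (v + s)\<^sup>2)) * s powr m * (1 + (v + s)\<^sup>2) powr (- m)"

lemma Phi_ode_identity:
  fixes m v s T :: real
  assumes "s > 0" "T = 1 + (v + s)\<^sup>2"
  shows "m * (1 - 2 * (1 + v\<^sup>2) * (T - 2 * (v + s)\<^sup>2) / T\<^sup>2)
      + m / s * (m * (2 * v + s - 2 * (v + s) * (1 + v\<^sup>2) / T))
      - m / T * (2 * (v + s)) * (m * (2 * v + s - 2 * (v + s) * (1 + v\<^sup>2) / T))
    = (1 + v\<^sup>2) * (- 2 * m * (1 - 2 * (m + 1) * ((v + s)\<^sup>2 / T)) * (1 / T)) - m * (m - 1)"
proof -
  have T: "T > 0"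
    using assms(2) by (simp add: add_pos_nonneg)
  have "s * T\<^sup>2 * (m * (1 - 2 * (1 + v\<^sup>2) * (T - 2 * (v + s)\<^sup>2) / T\<^sup>2)
      + m / s * (m * (2 * v + s - 2 * (v + s) * (1 + v\<^sup>2) / T))
      - m / T * (2 * (v + s)) * (m * (2 * v + s - 2 * (v + s) * (1 + v\<^sup>2) / T)))
    = s * T\<^sup>2 * ((1 + v\<^sup>2) * (- 2 * m * (1 - 2 * (m + 1) * ((v + s)\<^sup>2 / T)) * (1 / T)) - m * (m - 1))"
    using assms(1) T by (simp add: field_simps power2_eq_square) (use assms(2) in algebra)
  then show ?thesis
    using assms(1) T by simp
qed

lemma has_real_derivative_Phi_ode_primitive:
  assumes s: "s > 0"
  shows "((\<lambda>s. Phi_ode_primitive m v s) has_real_derivative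
      (1 + v\<^sup>2) * Phi_kernel'' m v s - m * (m - 1) * Phi_kernel m v s) (at s)"
proof -
  define T where "T = 1 + (v + s)\<^sup>2"
  define a where "a = m * (2 * v + s - 2 * (v + s) * (1 + v\<^sup>2) / T)"
  have T: "T > 0"
    unfolding T_def by simp
  have A: "((\<lambda>s. m * (2 * v + s - 2 * (v + s) * (1 + v\<^sup>2) / (1 + (v + s)\<^sup>2))) has_real_derivative
      m * (1 - 2 * (1 + v\<^sup>2) * (T - 2 * (v + s)\<^sup>2) / T\<^sup>2)) (at s)"
    using T unfolding T_def
    by (auto intro!: derivative_eq_intros simp: field_simps power2_eq_square)
  have P: "((\<lambda>s. s powr m) has_real_derivative m * (s powr m / s)) (at s)"
    using has_real_derivative_powr[OF s, of m] s by (simp add: powr_diff)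
  have "((\<lambda>s. 1 + (v + s)\<^sup>2) has_real_derivative 2 * (v + s)) (at s)"
    by (auto intro!: derivative_eq_intros)
  from DERIV_fun_powr[OF this one_plus_square_pos, of "- m"]
  have Q: "((\<lambda>s. (1 + (v + s)\<^sup>2) powr (- m)) has_real_derivative
      - m * (T powr (- m) / T) * (2 * (v + s))) (at s)"
    using T by (simp add: T_def powr_diff)
  have K: "Phi_kernel m v s = s powr m * T powr (- m)"
    using s by (simp add: Phi_kernel_def T_def)
  have "(m * (1 - 2 * (1 + v\<^sup>2) * (T - 2 * (v + s)\<^sup>2) / T\<^sup>2) * s powr m + m * (s powr m / s) * a)
        * T powr (- m) + - m * (T powr (- m) / T) * (2 * (v + s)) * (a * s powr m)
      = s powr m * T powr (- m) * (m * (1 - 2 * (1 + v\<^sup>2) * (T - 2 * (v + s)\<^sup>2) / T\<^sup>2)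
          + m / s * a - m / T * (2 * (v + s)) * a)"
    by (simp add: algebra_simps)
  also have "\<dots> = (1 + v\<^sup>2) * Phi_kernel'' m v s - m * (m - 1) * Phi_kernel m v s"
    unfolding a_def Phi_ode_identity[OF s T_def] Phi_kernel''_def T_def[symmetric] K
    by (simp add: algebra_simps)
  finally show ?thesis
    using DERIV_mult[OF DERIV_mult[OF A P] Q]
    unfolding Phi_ode_primitive_def a_def T_def by simp
qed

lemma Phi_ode_primitive_tendsto_0:
  assumes "m > 0"
  shows "((\<lambda>s. Phi_ode_primitive m v s) \<longlongrightarrow> 0) (at_right 0)"
proof -
  have "((\<lambda>s::real. s powr m) \<longlongrightarrow> 0) (at_right 0)"
    using assms by (intro tendsto_zero_powrI tendsto_ident_at tendsto_const)
      (auto simp: eventually_at_right_less eventually_at_right_field)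
  then have "((\<lambda>s. m * (2 * v + s - 2 * (v + s) * (1 + v\<^sup>2) / (1 + (v + s)\<^sup>2)) * s powr m
      * (1 + (v + s)\<^sup>2) powr (- m)) \<longlongrightarrow>
      m * (2 * v + 0 - 2 * (v + 0) * (1 + v\<^sup>2) / (1 + (v + 0)\<^sup>2)) * 0 * (1 + (v + 0)\<^sup>2) powr (- m))
      (at_right 0)"
    by (intro tendsto_intros) (auto simp: add_pos_nonneg)
  then show ?thesis
    unfolding Phi_ode_primitive_def by simp
qed

lemma abs_Phi_ode_primitive_le:
  assumes "m \<ge> 0" "s > 0"
  shows "\<bar>Phi_ode_primitive m v s\<bar>
    \<le> m * (2 + 2 * v\<^sup>2 + 2 * \<bar>v\<bar>) * (3 * (1 + v\<^sup>2)) powr m * (1 + s) powr (1 - m)"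
proof -
  define t where "t = v + s"
  define a where "a = 2 * v + s - 2 * t * (1 + v\<^sup>2) / (1 + t\<^sup>2)"
  have "\<bar>t\<bar> / (1 + t\<^sup>2) \<le> 1"
    using abs_le_one_plus_square[of t] by simp
  then have "2 * (1 + v\<^sup>2) * (\<bar>t\<bar> / (1 + t\<^sup>2)) \<le> 2 * (1 + v\<^sup>2)"
    by (intro mult_left_le) auto
  then have "\<bar>2 * t * (1 + v\<^sup>2) / (1 + t\<^sup>2)\<bar> \<le> 2 * (1 + v\<^sup>2)"
    by (simp add: abs_mult mult_ac)
  then have "\<bar>a\<bar> \<le> 2 * \<bar>v\<bar> + s + 2 * (1 + v\<^sup>2)"
    using assms(2) abs_ge_self[of v] abs_ge_minus_self[of v] unfolding a_def abs_le_iff by linarith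
  also have "\<dots> \<le> (2 + 2 * v\<^sup>2 + 2 * \<bar>v\<bar>) * (1 + s)"
  proof -
    have "0 \<le> (1 + 2 * v\<^sup>2 + 2 * \<bar>v\<bar>) * s"
      using assms(2) by simp
    then show ?thesis
      by (simp add: algebra_simps)
  qed
  finally have "\<bar>a\<bar> \<le> (2 + 2 * v\<^sup>2 + 2 * \<bar>v\<bar>) * (1 + s)" .
  moreover have "Phi_ode_primitive m v s = m * a * Phi_kernel m v s"
    using assms(2) by (simp add: Phi_ode_primitive_def Phi_kernel_def a_def t_def)
  moreover have "Phi_kernel m v s \<le> (3 * (1 + v\<^sup>2)) powr m * (1 + s) powr (- m)"
    using Phi_kernel_le_majorant[of v "\<bar>v\<bar>" m s] assms by (simp add: Phi_kernel_majorant_def)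
  ultimately have "\<bar>Phi_ode_primitive m v s\<bar>
      \<le> m * ((2 + 2 * v\<^sup>2 + 2 * \<bar>v\<bar>) * (1 + s)) * ((3 * (1 + v\<^sup>2)) powr m * (1 + s) powr (- m))"
    using assms(1) by (simp add: abs_mult Phi_kernel_nonneg mult_mono)
  also have "\<dots> = m * (2 + 2 * v\<^sup>2 + 2 * \<bar>v\<bar>) * (3 * (1 + v\<^sup>2)) powr m * (1 + s) powr (1 - m)"
    using assms(2) by (simp add: powr_diff powr_minus field_simps)
  finally show ?thesis .
qed

lemma Phi_ode_primitive_tendsto_at_top:
  assumes m: "m > 1"
  shows "((\<lambda>s. Phi_ode_primitive m v s) \<longlongrightarrow> 0) at_top"
proof (rule Lim_null_comparison)
  define K where "K = m * (2 + 2 * v\<^sup>2 + 2 * \<bar>v\<bar>) * (3 * (1 + v\<^sup>2)) powr m"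
  show "\<forall>\<^sub>F s in at_top. norm (Phi_ode_primitive m v s) \<le> K * (1 + s) powr (1 - m)"
    using eventually_gt_at_top[of 0] by eventually_elim (use m abs_Phi_ode_primitive_le in \<open>simp add: K_def\<close>)
  have "((\<lambda>s. (1 + s) powr (1 - m)) \<longlongrightarrow> 0) at_top"
    using m by (intro tendsto_neg_powr filterlim_tendsto_add_at_top[OF tendsto_const filterlim_ident])
      auto
  then show "((\<lambda>s. K * (1 + s) powr (1 - m)) \<longlongrightarrow> 0) at_top"
    by (rule tendsto_mult_right_zero)
qed

lemma Phi_ode:
  assumes m: "m > 1"
  shows "(1 + v\<^sup>2) * Phi'' m v = m * (m - 1) * Phi m v"
proof -
  define f where "f s = (1 + v\<^sup>2) * Phi_kernel'' m v s - m * (m - 1) * Phi_kernel m v s" for s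
  have f_int: "integrable lborel f"
    unfolding f_def using integrable_Phi_kernels[OF m] by auto
  have "(LBINT s=ereal 0..\<infinity>. f s) = 0 - 0"
  proof (rule interval_integral_FTC_integrable[where F = "Phi_ode_primitive m v"])
    show "(Phi_ode_primitive m v has_vector_derivative f x) (at x)" if "ereal 0 < ereal x" for x
      using has_real_derivative_Phi_ode_primitive[of x m v] that
      unfolding f_def has_real_derivative_iff_has_vector_derivative by simp
    show "isCont f x" if "ereal 0 < ereal x" for x
      using that unfolding f_def by (intro continuous_intros isCont_Phi_kernel isCont_Phi_kernel'') auto
    show "set_integrable lborel (einterval (ereal 0) \<infinity>) f"
      unfolding set_integrable_def by (rule integrable_mult_indicator) (auto intro: f_int)
    show "((Phi_ode_primitive m v \<circ> real_of_ereal) \<longlongrightarrow> 0) (at_right (ereal 0))"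
      unfolding ereal_tendsto_simps1 using Phi_ode_primitive_tendsto_0[of m v] m by simp
    show "((Phi_ode_primitive m v \<circ> real_of_ereal) \<longlongrightarrow> 0) (at_left \<infinity>)"
      unfolding ereal_tendsto_simps1 using Phi_ode_primitive_tendsto_at_top[OF m, of v] by simp
  qed auto
  moreover have "(LBINT s=ereal 0..\<infinity>. f s) = (\<integral>s. f s \<partial>lborel)"
    unfolding interval_integral_to_infinity_eq set_lebesgue_integral_def
    by (rule Bochner_Integration.integral_cong) (auto simp: indicator_def f_def Phi_kernel''_def Phi_kernel_eq_0)
  moreover have "(\<integral>s. f s \<partial>lborel) = (1 + v\<^sup>2) * Phi'' m v - m * (m - 1) * Phi m v"
    unfolding f_def Phi_def Phi''_def using integrable_Phi_kernels[OF m]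
    by (simp add: Bochner_Integration.integral_diff)
  ultimately show ?thesis by simp
qed

lemma Phi_L0_solution:
  assumes "\<gamma> > 0"
  shows "L0_solution \<gamma> (Phi (\<gamma> + 1))"
proof (rule L0_solutionI)
  have m: "\<gamma> + 1 > 1"
    using assms by simp
  show "(Phi (\<gamma> + 1) has_real_derivative Phi' (\<gamma> + 1) v) (at v)" for v
    using m by (rule has_real_derivative_Phi)
  show "(Phi' (\<gamma> + 1) has_real_derivative Wt \<gamma> v * Phi (\<gamma> + 1) v) (at v)" for v
  proof -
    have "Phi'' (\<gamma> + 1) v = Wt \<gamma> v * Phi (\<gamma> + 1) v"
      using Phi_ode[OF m, of v] by (simp add: Wt_def field_simps)
    then show ?thesis
      using has_real_derivative_Phi'[OF m, of v] by simp
  qed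
qed

lemma Phi_pos:
  assumes "m > 1"
  shows "Phi m v > 0"
  unfolding Phi_def
proof (rule integral_pos_lborel[where a = 0 and b = 1])
  show "0 < Phi_kernel m v s" if "0 < s" for s
    using that by (simp add: Phi_kernel_def)
qed (simp_all add: integrable_Phi_kernels[OF assms] Phi_kernel_nonneg)

lemma Phi'_0_neg:
  assumes "m > 1"
  shows "Phi' m 0 < 0"
proof -
  have "0 < (\<integral>s. - Phi_kernel' m 0 s \<partial>lborel)"
  proof (rule integral_pos_lborel[where a = 0 and b = 1])
    show "0 \<le> - Phi_kernel' m 0 s" for s
      using assms Phi_kernel_nonneg[of m 0 s] Phi_kernel_eq_0[of s m 0]
      by (cases "s \<le> 0") (auto simp: Phi_kernel'_def)
    show "0 < - Phi_kernel' m 0 s" if "0 < s" "s < 1" for s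
      using that assms by (auto simp: Phi_kernel'_def Phi_kernel_def intro!: mult_pos_pos divide_pos_pos)
  qed (use integrable_Phi_kernels(2)[OF assms] in auto)
  then show ?thesis
    unfolding Phi'_def by simp
qed

section \<open>Asymptotics at infinity\<close>

text \<open>The integrands obtained from \<open>Phi m v\<close> by the substitution \<open>s = v s'\<close> and from
  \<open>Phi m (- w)\<close> by \<open>s = w + t\<close>, with \<open>e = 1 / v\<close> resp. \<open>e = 1 / w\<close>.\<close>

definition Phi_kernel_at_top :: "real \<Rightarrow> real \<Rightarrow> real \<Rightarrow> real" where
  "Phi_kernel_at_top m e s = (max s 0) powr m * (e\<^sup>2 + (1 + s)\<^sup>2) powr (- m)"

definition Phi_kernel_at_bot :: "real \<Rightarrow> real \<Rightarrow> real \<Rightarrow> real" where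
  "Phi_kernel_at_bot m e t = (max (1 + e * t) 0) powr m * (1 + t\<^sup>2) powr (- m)"

lemma Phi_rescaled_at_top:
  assumes v: "v > 0"
  shows "v powr (m - 1) * Phi m v = (\<integral>s. Phi_kernel_at_top m (1 / v) s \<partial>lborel)"
proof -
  have "Phi_kernel m v (v * s) = v powr (- m) * Phi_kernel_at_top m (1 / v) s" for s
  proof -
    have "max (v * s) 0 = v * max s 0"
      using v by (auto simp: max_def mult_le_0_iff)
    moreover have "1 + (v + v * s)\<^sup>2 = v\<^sup>2 * ((1 / v)\<^sup>2 + (1 + s)\<^sup>2)"
      using v by (simp add: field_simps power2_eq_square)
    moreover have "(v\<^sup>2) powr (- m) = v powr (- m) * v powr (- m)"
      using v by (simp add: powr_mult[symmetric] power2_eq_square)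
    ultimately show ?thesis
      using v by (simp add: Phi_kernel_def Phi_kernel_at_top_def powr_mult powr_add[symmetric])
  qed
  moreover have "Phi m v = v * (\<integral>s. Phi_kernel m v (v * s) \<partial>lborel)"
    unfolding Phi_def using lborel_integral_real_affine[of v "Phi_kernel m v" 0] v by simp
  ultimately have "Phi m v = v * v powr (- m) * (\<integral>s. Phi_kernel_at_top m (1 / v) s \<partial>lborel)"
    by simp
  moreover have "v powr (m - 1) * (v * v powr (- m)) = 1"
    using v by (simp add: powr_diff powr_minus)
  ultimately show ?thesis
    by (metis mult.assoc mult_1)
qed

lemma Phi_rescaled_at_bot:
  assumes w: "w > 0"
  shows "w powr (- m) * Phi m (- w) = (\<integral>t. Phi_kernel_at_bot m (1 / w) t \<partial>lborel)"
proof -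
  have "Phi_kernel m (- w) (w + t) = w powr m * Phi_kernel_at_bot m (1 / w) t" for t
  proof -
    have "max (w + t) 0 = w * max (1 + 1 / w * t) 0"
      using w by (auto simp: max_def field_simps mult_le_0_iff)
    then show ?thesis
      using w by (simp add: Phi_kernel_def Phi_kernel_at_bot_def powr_mult)
  qed
  moreover have "Phi m (- w) = (\<integral>t. Phi_kernel m (- w) (w + t) \<partial>lborel)"
    unfolding Phi_def using lborel_integral_real_affine[of 1 "Phi_kernel m (- w)" w] by simp
  ultimately show ?thesis
    using w by (simp add: powr_minus)
qed

lemma isCont_Phi_kernel_at_top: "isCont (\<lambda>e. Phi_kernel_at_top m e s) 0"
proof (cases "s > 0")
  case True
  then show ?thesis
    unfolding Phi_kernel_at_top_def by (intro continuous_intros) auto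
next
  case False
  then have "(\<lambda>e. Phi_kernel_at_top m e s) = (\<lambda>e. 0)"
    by (simp add: Phi_kernel_at_top_def max_def)
  then show ?thesis
    by simp
qed

lemma isCont_Phi_kernel_at_bot: "isCont (\<lambda>e. Phi_kernel_at_bot m e t) 0"
  unfolding Phi_kernel_at_bot_def by (intro continuous_intros) auto

lemma abs_Phi_kernel_at_top_le:
  assumes "m \<ge> 0"
  shows "\<bar>Phi_kernel_at_top m e s\<bar> \<le> (1 + \<bar>s\<bar>) powr (- m)"
proof (cases "s > 0")
  case True
  have "(e\<^sup>2 + (1 + s)\<^sup>2) powr (- m) \<le> ((1 + s)\<^sup>2) powr (- m)"
    using True assms by (intro powr_mono2') auto
  also have "\<dots> = (1 + s) powr (- m) * (1 + s) powr (- m)"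
    using True by (simp add: powr_mult[symmetric] power2_eq_square)
  finally have "Phi_kernel_at_top m e s \<le> s powr m * ((1 + s) powr (- m) * (1 + s) powr (- m))"
    using True by (simp add: Phi_kernel_at_top_def mult_left_mono)
  also have "\<dots> \<le> (1 + s) powr m * ((1 + s) powr (- m) * (1 + s) powr (- m))"
    using True assms by (intro mult_right_mono powr_mono2) auto
  also have "\<dots> = (1 + \<bar>s\<bar>) powr (- m)"
    using True by (simp add: powr_minus)
  finally show ?thesis
    by (simp add: Phi_kernel_at_top_def)
qed (simp add: Phi_kernel_at_top_def max_def)

lemma abs_Phi_kernel_at_bot_le:
  assumes "m \<ge> 0" "\<bar>e\<bar> \<le> 1"
  shows "\<bar>Phi_kernel_at_bot m e t\<bar> \<le> 2 powr m * (1 + \<bar>t\<bar>) powr (- m)"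
proof -
  define x where "x = 1 + \<bar>t\<bar>"
  have x: "x > 0"
    unfolding x_def by simp
  have "e * t \<le> \<bar>e\<bar> * \<bar>t\<bar>"
    unfolding abs_mult[symmetric] by (rule abs_ge_self)
  also have "\<dots> \<le> \<bar>t\<bar>"
    using mult_right_mono[OF assms(2) abs_ge_zero[of t]] by simp
  finally have "(max (1 + e * t) 0) powr m \<le> x powr m"
    unfolding x_def using assms(1) by (intro powr_mono2) auto
  moreover have "(1 + t\<^sup>2) powr (- m) \<le> (x\<^sup>2 / 2) powr (- m)"
  proof (rule powr_mono2')
    have "0 \<le> (\<bar>t\<bar> - 1)\<^sup>2"
      by simp
    then show "x\<^sup>2 / 2 \<le> 1 + t\<^sup>2"
      unfolding x_def by (simp add: power2_eq_square algebra_simps)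
  qed (use assms(1) x in auto)
  moreover have "(x\<^sup>2 / 2) powr (- m) = 2 powr m * (x powr (- m) * x powr (- m))"
  proof -
    have "(x\<^sup>2 / 2) powr (- m) = (x * x) powr (- m) / 2 powr (- m)"
      by (simp add: powr_divide power2_eq_square)
    also have "\<dots> = x powr (- m) * x powr (- m) / (1 / 2 powr m)"
      using x by (simp add: powr_mult powr_minus_divide)
    finally show ?thesis
      by simp
  qed
  ultimately have "Phi_kernel_at_bot m e t \<le> x powr m * (2 powr m * (x powr (- m) * x powr (- m)))"
    unfolding Phi_kernel_at_bot_def by (intro mult_mono) auto
  also have "\<dots> = 2 powr m * x powr (- m) * (x powr m * x powr (- m))"
    by (simp add: ac_simps)
  also have "x powr m * x powr (- m) = 1"
    using x by (simp add: powr_add[symmetric])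
  finally show ?thesis
    by (simp add: Phi_kernel_at_bot_def x_def)
qed

lemma Phi_asymp_equiv_at_top:
  assumes m: "m > 1"
  obtains c where "c > 0" "Phi m \<sim>[at_top] (\<lambda>v. c * \<bar>v\<bar> powr (1 - m))"
proof -
  define c where "c = (\<integral>s. Phi_kernel_at_top m 0 s \<partial>lborel)"
  have meas: "Phi_kernel_at_top m e \<in> borel_measurable borel" for e
    unfolding Phi_kernel_at_top_def by measurable
  have bound: "\<bar>Phi_kernel_at_top m e s\<bar> \<le> (1 + \<bar>s\<bar>) powr (- m)" for e s
    using m by (intro abs_Phi_kernel_at_top_le) auto
  note majorant = integrable_one_plus_abs_powr[OF m]
  have "((\<lambda>v. \<integral>s. Phi_kernel_at_top m (1 / v) s \<partial>lborel) \<longlongrightarrow> c) at_top"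
    unfolding c_def
  proof (rule tendsto_integral_rescaled_at_top[OF meas majorant bound])
    show "isCont (\<lambda>e. Phi_kernel_at_top m e s) 0" for s
      by (rule isCont_Phi_kernel_at_top)
  qed
  then have "((\<lambda>v. v powr (m - 1) * Phi m v) \<longlongrightarrow> c) at_top"
    by (rule Lim_transform_eventually)
      (use eventually_gt_at_top[of 0] in \<open>eventually_elim, simp add: Phi_rescaled_at_top\<close>)
  moreover have "c > 0"
    unfolding c_def
  proof (rule integral_pos_lborel[where a = 0 and b = 1])
    show "integrable lborel (Phi_kernel_at_top m 0)"
      by (rule Bochner_Integration.integrable_bound[OF majorant]) (simp_all add: meas bound)
    show "0 < Phi_kernel_at_top m 0 s" if "0 < s" for s
      using that by (simp add: Phi_kernel_at_top_def)
  qed (simp_all add: Phi_kernel_at_top_def)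
  ultimately show thesis
    using asymp_equiv_at_top_of_powr_limit[of "m - 1" "Phi m" c] that by simp
qed

lemma Phi_asymp_equiv_at_bot:
  assumes m: "m > 1"
  obtains c where "c > 0" "Phi m \<sim>[at_bot] (\<lambda>v. c * \<bar>v\<bar> powr m)"
proof -
  define c where "c = (\<integral>t. Phi_kernel_at_bot m 0 t \<partial>lborel)"
  have meas: "Phi_kernel_at_bot m e \<in> borel_measurable borel" for e
    unfolding Phi_kernel_at_bot_def by measurable
  have bound: "\<bar>Phi_kernel_at_bot m e t\<bar> \<le> 2 powr m * (1 + \<bar>t\<bar>) powr (- m)" if "\<bar>e\<bar> \<le> 1" for e t
    using m that by (intro abs_Phi_kernel_at_bot_le) auto
  have majorant: "integrable lborel (\<lambda>t. 2 powr m * (1 + \<bar>t\<bar>) powr (- m))"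
    using integrable_one_plus_abs_powr[OF m] by simp
  have "((\<lambda>w. \<integral>t. Phi_kernel_at_bot m (1 / w) t \<partial>lborel) \<longlongrightarrow> c) at_top"
    unfolding c_def
  proof (rule tendsto_integral_rescaled_at_top[OF meas majorant bound])
    show "isCont (\<lambda>e. Phi_kernel_at_bot m e t) 0" for t
      by (rule isCont_Phi_kernel_at_bot)
  qed
  then have "((\<lambda>w. w powr (- m) * Phi m (- w)) \<longlongrightarrow> c) at_top"
    by (rule Lim_transform_eventually)
      (use eventually_gt_at_top[of 0] in \<open>eventually_elim, simp add: Phi_rescaled_at_bot\<close>)
  moreover have "c > 0"
    unfolding c_def
  proof (rule integral_pos_lborel[where a = 0 and b = 1])
    show "integrable lborel (Phi_kernel_at_bot m 0)"
      by (rule Bochner_Integration.integrable_bound[OF majorant]) (simp_all add: meas bound)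
  qed (simp_all add: Phi_kernel_at_bot_def)
  ultimately have "(\<lambda>w. Phi m (- w)) \<sim>[at_top] (\<lambda>w. c * \<bar>- w\<bar> powr m)"
    using asymp_equiv_at_top_of_powr_limit[of "- m" "\<lambda>w. Phi m (- w)" c] by simp
  then show thesis
    using that \<open>c > 0\<close> by (simp add: asymp_equiv_at_bot_iff_mirror)
qed

section \<open>Normalization of the Wronskian\<close>

lemma normalized_solution_exists:
  assumes "\<gamma> > 0"
  shows "\<exists>\<psi> c1 c2. L0_solution \<gamma> \<psi> \<and> (\<forall>v. \<psi> v > 0) \<and>
    (\<forall>v. \<psi> v * deriv (\<lambda>v. \<psi> (- v)) v - deriv \<psi> v * \<psi> (- v) = 1) \<and> c1 > 0 \<and> c2 > 0 \<and>
    \<psi> \<sim>[at_top] (\<lambda>v. c1 * \<bar>v\<bar> powr (- \<gamma>)) \<and> \<psi> \<sim>[at_bot] (\<lambda>v. c2 * \<bar>v\<bar> powr (1 + \<gamma>))"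
proof -
  define m where "m = \<gamma> + 1"
  have m: "m > 1"
    using assms by (simp add: m_def)
  have sol: "L0_solution \<gamma> (Phi m)"
    unfolding m_def using assms by (rule Phi_L0_solution)
  have Phi'_0: "deriv (Phi m) 0 = Phi' m 0"
    by (rule DERIV_imp_deriv[OF has_real_derivative_Phi[OF m]])
  define X where "X = - 2 * Phi m 0 * deriv (Phi m) 0"
  have X: "X > 0"
    unfolding X_def Phi'_0 using Phi_pos[OF m] Phi'_0_neg[OF m] by (simp add: mult_pos_neg)
  define k where "k = 1 / sqrt X"
  have "k * k * X = X / (sqrt X * sqrt X)"
    by (simp add: k_def)
  then have k: "k > 0" "k * k * X = 1"
    using X by (simp_all add: k_def real_sqrt_mult_self)
  define \<psi> where "\<psi> = (\<lambda>v. k * Phi m v)"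
  have sol\<psi>: "L0_solution \<gamma> \<psi>"
    unfolding \<psi>_def by (rule L0_solution_cmult[OF sol])
  have "deriv \<psi> 0 = k * deriv (Phi m) 0"
    unfolding \<psi>_def Phi'_0 by (intro DERIV_imp_deriv DERIV_cmult has_real_derivative_Phi m)
  then have W: "\<psi> v * deriv (\<lambda>v. \<psi> (- v)) v - deriv \<psi> v * \<psi> (- v) = 1" for v
    using wronskian_reflect[OF sol\<psi>, of v] k(2) by (simp add: \<psi>_def X_def algebra_simps)
  obtain c1 where c1: "c1 > 0" "Phi m \<sim>[at_top] (\<lambda>v. c1 * \<bar>v\<bar> powr (1 - m))"
    using Phi_asymp_equiv_at_top[OF m] by blast
  obtain c2 where c2: "c2 > 0" "Phi m \<sim>[at_bot] (\<lambda>v. c2 * \<bar>v\<bar> powr m)"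
    using Phi_asymp_equiv_at_bot[OF m] by blast
  have "\<psi> \<sim>[at_top] (\<lambda>v. (k * c1) * \<bar>v\<bar> powr (- \<gamma>))" "\<psi> \<sim>[at_bot] (\<lambda>v. (k * c2) * \<bar>v\<bar> powr (1 + \<gamma>))"
    using asymp_equiv_mult[OF asymp_equiv_refl[of "\<lambda>_. k"] c1(2)]
      asymp_equiv_mult[OF asymp_equiv_refl[of "\<lambda>_. k"] c2(2)]
    by (simp_all add: \<psi>_def m_def mult.assoc add.commute)
  moreover have "\<psi> v > 0" for v
    unfolding \<psi>_def using k(1) Phi_pos[OF m] by simp
  ultimately show ?thesis
    using sol\<psi> W k(1) c1(1) c2(1) mult_pos_pos by blast
qed

theorem proposition2p4:
  fixes \<gamma> :: real
  assumes "\<gamma> > 1/2"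
  shows "\<exists>\<psi>1 \<psi>2 :: real \<Rightarrow> real.
    smooth_real \<psi>1 \<and> smooth_real \<psi>2 \<and>
    L0_solution \<gamma> \<psi>1 \<and> L0_solution \<gamma> \<psi>2 \<and>
    (\<forall>v. \<psi>1 v > 0) \<and> (\<forall>v. \<psi>2 v > 0) \<and>
    (\<forall>v. \<psi>1 (-v) = \<psi>2 v) \<and>
    (\<forall>\<phi>. L0_solution \<gamma> \<phi> \<longrightarrow> (\<exists>a b. \<forall>v. \<phi> v = a * \<psi>1 v + b * \<psi>2 v)) \<and>
    (\<forall>a b. (\<forall>v. a * \<psi>1 v + b * \<psi>2 v = 0) \<longrightarrow> a = 0 \<and> b = 0) \<and>
    (\<forall>v. \<psi>1 v * deriv \<psi>2 v - deriv \<psi>1 v * \<psi>2 v = 1) \<and>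
    (\<exists>v0 c1 c2 C. v0 > 0 \<and> c1 > 0 \<and> c2 > 0 \<and> C > 0 \<and>
       (\<forall>v. v \<ge> v0 \<longrightarrow> \<psi>1 v \<le> C * \<bar>v\<bar> powr (-\<gamma>)) \<and>
       (\<forall>v. v \<le> -v0 \<longrightarrow> \<psi>1 v \<le> C * \<bar>v\<bar> powr (1 + \<gamma>)) \<and>
       (\<psi>1 \<sim>[at_top] (\<lambda>v. c1 * \<bar>v\<bar> powr (-\<gamma>))) \<and>
       (\<psi>1 \<sim>[at_bot] (\<lambda>v. c2 * \<bar>v\<bar> powr (1 + \<gamma>))) \<and>
       (\<forall>v. v \<ge> v0 \<longrightarrow> \<psi>2 v \<le> C * \<bar>v\<bar> powr (\<gamma> + 1)) \<and>
       (\<forall>v. v \<le> -v0 \<longrightarrow> \<psi>2 v \<le> C * \<bar>v\<bar> powr (-\<gamma>)) \<and>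
       (\<psi>2 \<sim>[at_top] (\<lambda>v. c2 * \<bar>v\<bar> powr (1 + \<gamma>))) \<and>
       (\<psi>2 \<sim>[at_bot] (\<lambda>v. c1 * \<bar>v\<bar> powr (-\<gamma>))))"
proof -
  obtain \<psi> c1 c2 where sol: "L0_solution \<gamma> \<psi>" and pos: "\<forall>v. \<psi> v > 0"
    and W: "\<forall>v. \<psi> v * deriv (\<lambda>v. \<psi> (- v)) v - deriv \<psi> v * \<psi> (- v) = 1"
    and c: "c1 > 0" "c2 > 0"
    and top: "\<psi> \<sim>[at_top] (\<lambda>v. c1 * \<bar>v\<bar> powr (- \<gamma>))"
    and bot: "\<psi> \<sim>[at_bot] (\<lambda>v. c2 * \<bar>v\<bar> powr (1 + \<gamma>))"
    using normalized_solution_exists[of \<gamma>] assms by auto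
  obtain v0 C where bounds: "v0 > 0" "C > 0" "\<forall>v\<ge>v0. \<psi> v \<le> C * \<bar>v\<bar> powr (- \<gamma>)"
    "\<forall>v\<le>-v0. \<psi> v \<le> C * \<bar>v\<bar> powr (1 + \<gamma>)"
    using powr_bounds_of_asymp_equiv[OF top bot c] by blast
  define \<psi>2 where "\<psi>2 = (\<lambda>v. \<psi> (- v))"
  have sol2: "L0_solution \<gamma> \<psi>2"
    unfolding \<psi>2_def by (rule L0_solution_reflect[OF sol])
  have W2: "\<forall>v. \<psi> v * deriv \<psi>2 v - deriv \<psi> v * \<psi>2 v = 1"
    using W by (simp add: \<psi>2_def)
  have asymp2: "\<psi>2 \<sim>[at_top] (\<lambda>v. c2 * \<bar>v\<bar> powr (1 + \<gamma>))"
    "\<psi>2 \<sim>[at_bot] (\<lambda>v. c1 * \<bar>v\<bar> powr (- \<gamma>))"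
    using top bot by (simp_all add: \<psi>2_def asymp_equiv_at_bot_iff_mirror)
  have bound2: "\<forall>v\<ge>v0. \<psi>2 v \<le> C * \<bar>v\<bar> powr (\<gamma> + 1)"
    "\<forall>v\<le>- v0. \<psi>2 v \<le> C * \<bar>v\<bar> powr (- \<gamma>)"
    using bounds(4)[rule_format, of "- _"] bounds(3)[rule_format, of "- _"]
    by (auto simp: \<psi>2_def add.commute)
  have pos2: "\<forall>v. \<psi>2 v > 0" "\<forall>v. \<psi> (- v) = \<psi>2 v"
    using pos by (simp_all add: \<psi>2_def)
  show ?thesis
  proof (rule exI[of _ \<psi>], rule exI[of _ \<psi>2], intro conjI)
  qed (use sol sol2 pos pos2 W2 bounds bound2 c top bot asymp2 L0_solution_smooth
      L0_solution_in_span[OF sol sol2 _ W2] L0_solutions_independent[OF sol sol2 W2] in blast)+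
qed

end
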